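(* For every positive integer $d$, the following identity holds in $K[t,z]$: \[\sum_{a\in A(d)}\chi_t(a)\,\frac{\ell_d E_d(z-a)}{z-a}=\sum_{j=0}^{d-1}b_j(t)E_j(z).\]
   Context: $A=\mathbb{F}_q[\theta]$, $K=\mathbb{F}_q(\theta)$; $\chi_t:A\to\mathbb{F}_q[t]$ the $\mathbb{F}_q$-algebra map with $\theta\mapsto t$. $b_j(t)=\prod_{i=0}^{j-1}(t-\theta^{q^i})$; $\ell_d=\prod_{j=1}^{d}(\theta-\theta^{q^j})$. $D_j$ is the product of all monic polynomials of degree $j$ in $A$. $A(d)$ is the set of elements of $A$ of degree $<d$ ($A(0)=\{0\}$), and $E_d(z)=D_d^{-1}\prod_{a\in A(d)}(z-a)$; note $E_d(z-a)/(z-a)$ is a polynomial in $z$ for $a\in A(d)$. *)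

theory Defs
  imports "HOL-Computational_Algebra.Computational_Algebra"
begin

text \<open>Setting: F_q is a finite field 'k with q = card (UNIV :: 'k set); A = 'k poly (variable theta);
K = 'k poly fract.  A polynomial in K[t,z] is represented as an element of
(K poly) poly: the outer variable is z, the coefficients lie in K[t].\<close>

definition thetaK :: "'k::{field,finite} poly fract" where
  "thetaK = to_fract [:0, 1:]"

definition Adeg :: "nat \<Rightarrow> 'k::{field,finite} poly set" where
  "Adeg d = {a. a = 0 \<or> degree a < d}"

definition Dprod :: "nat \<Rightarrow> 'k::{field,finite} poly" where
  "Dprod j = (\<Prod>a\<in>{a::'k poly. lead_coeff a = 1 \<and> degree a = j}. a)"

definition ell :: "nat \<Rightarrow> 'k::{field,finite} poly" where
  "ell d = (\<Prod>j\<in>{1..d}. [:0, 1:] - [:0, 1:] ^ (card (UNIV :: 'k set) ^ j))"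

definition Epoly :: "nat \<Rightarrow> 'k::{field,finite} poly fract poly" where
  "Epoly d = smult (inverse (to_fract (Dprod d)))
                (\<Prod>a\<in>Adeg d. [:- to_fract a, 1:])"

definition bpoly :: "nat \<Rightarrow> 'k::{field,finite} poly fract poly" where
  "bpoly j = (\<Prod>i<j. [:- (thetaK ^ (card (UNIV :: 'k set) ^ i)), 1:])"

text \<open>chi_t : A \<rightarrow> F_q[t] \<subseteq> K[t], theta \<mapsto> t.\<close>
definition chi_t :: "'k::{field,finite} poly \<Rightarrow> 'k poly fract poly" where
  "chi_t a = map_poly (\<lambda>c. to_fract [:c:]) a"

definition liftz :: "'k::{field,finite} poly fract poly \<Rightarrow> 'k poly fract poly poly" where
  "liftz p = map_poly (\<lambda>c. [:c:]) p"

end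

theory Submission
  imports Defs "HOL-Library.Cardinality"
begin

text \<open>
  Both sides are polynomials in z of degree < q^d = |A(d)|, so it suffices to compare
  their values at z = b for every b in A(d).
  (1) Left side: E_d(z) = z R(z) with R(b) = 0 for b in A(d) - {0} and R(0) = 1/ell_d, so
      ell_d E_d(b-a)/(b-a) is the Kronecker delta and the left side takes the value chi_t(b).
  (2) Right side: with the nodes x_k = theta^(q^k), Carlitz's formula expresses E_j(y) as the
      j-th divided difference of k |-> y^(q^k); for y = b this is the j-th divided difference of
      the polynomial chi_t(b) at the nodes, since chi_t(b)(x_k) = b^(q^k) (Frobenius).  As
      b_j(t) = prod_{i<j} (t - x_i) is the Newton basis, Newton interpolation of chi_t(b),
      which has degree < d, gives sum_{j<d} b_j(t) E_j(b) = chi_t(b).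
\<close>

lemma degree_linear_factors:
  "degree (\<Prod>s\<in>S. [:- f s, 1:] :: 'a::idom poly) = card S"
  by (cases "finite S") (simp_all add: degree_prod_sum_eq)

lemma lead_coeff_linear_factors:
  "lead_coeff (\<Prod>s\<in>S. [:- f s, 1:] :: 'a::idom poly) = 1"
  by (simp add: lead_coeff_prod)

lemma Poly_map_coeff_upt: "degree p < n \<or> p = 0 \<Longrightarrow> Poly (map (coeff p) [0..<n]) = p"
  by (rule poly_eqI) (auto simp: nth_default_def coeff_eq_0)

definition divided_diff :: "(nat \<Rightarrow> 'a::field) \<Rightarrow> nat \<Rightarrow> (nat \<Rightarrow> 'a) \<Rightarrow> 'a" where
  "divided_diff x n y = (\<Sum>k\<le>n. y k / (\<Prod>m\<in>{..n}-{k}. x k - x m))"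

lemma divided_diff_cong:
  "(\<And>k. k \<le> n \<Longrightarrow> y k = y' k) \<Longrightarrow> divided_diff x n y = divided_diff x n y'"
  unfolding divided_diff_def by (intro sum.cong) auto

lemma lagrange_interpolation:
  fixes g :: "'a::field poly"
  assumes inj: "inj_on x {..n}" and deg: "degree g \<le> n"
  shows "g = (\<Sum>k\<le>n. smult (poly g (x k) / (\<Prod>m\<in>{..n}-{k}. x k - x m))
                         (\<Prod>m\<in>{..n}-{k}. [:- x m, 1:]))"
    (is "g = ?L")
proof (rule sym, rule poly_eqI_degree[where A = "x ` {..n}"])
  fix y assume "y \<in> x ` {..n}"
  then obtain j where j: "j \<le> n" "y = x j" by auto
  have "poly ?L y = (\<Sum>k\<le>n. poly g (x k) / (\<Prod>m\<in>{..n}-{k}. x k - x m)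
                              * (\<Prod>m\<in>{..n}-{k}. x j - x m))"
    by (simp add: j poly_sum poly_prod)
  also have "\<dots> = (\<Sum>k\<le>n. if k = j then poly g (x j) else 0)"
  proof (intro sum.cong refl)
    fix k assume "k \<in> {..n}"
    have "(\<Prod>m\<in>{..n}-{k}. x j - x m) = 0" if "k \<noteq> j"
      using j that by (intro prod_zero) auto
    moreover have "(\<Prod>m\<in>{..n}-{j}. x j - x m) \<noteq> 0"
      using inj j by (auto simp: inj_on_eq_iff)
    ultimately show "poly g (x k) / (\<Prod>m\<in>{..n}-{k}. x k - x m) * (\<Prod>m\<in>{..n}-{k}. x j - x m)
                     = (if k = j then poly g (x j) else 0)"
      by auto
  qed
  also have "\<dots> = poly g y" using j by simp
  finally show "poly ?L y = poly g y" .
next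
  have "degree ?L \<le> n"
    by (intro degree_sum_le order.trans[OF degree_smult_le])
       (auto simp: degree_linear_factors)
  thus "degree ?L < card (x ` {..n})" and "degree g < card (x ` {..n})"
    using inj deg by (simp_all add: card_image)
qed

text \<open>The top divided difference of the values of g at n+1 distinct nodes is the n-th
  coefficient of g (compare the coefficients of degree n in Lagrange's formula).\<close>
lemma divided_diff_eq_coeff:
  fixes g :: "'a::field poly"
  assumes "inj_on x {..n}" "degree g \<le> n"
  shows "divided_diff x n (\<lambda>k. poly g (x k)) = coeff g n"
proof -
  have top: "coeff (\<Prod>m\<in>{..n}-{k}. [:- x m, 1:]) n = 1" if "k \<le> n" for k
    using that lead_coeff_linear_factors[of x "{..n}-{k}"]
    by (simp add: degree_linear_factors)
  have "coeff g n = (\<Sum>k\<le>n. poly g (x k) / (\<Prod>m\<in>{..n}-{k}. x k - x m)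
                              * coeff (\<Prod>m\<in>{..n}-{k}. [:- x m, 1:]) n)"
    by (subst lagrange_interpolation[OF assms]) (simp add: coeff_sum)
  also have "\<dots> = divided_diff x n (\<lambda>k. poly g (x k))"
    by (simp add: divided_diff_def top)
  finally show ?thesis by simp
qed

text \<open>Induction on n, peeling off the top term, which is given by the previous lemma.\<close>
lemma newton_interpolation:
  fixes g :: "'a::field poly"
  assumes "inj_on x {..<n}" "g = 0 \<or> degree g < n"
  shows "g = (\<Sum>j<n. smult (divided_diff x j (\<lambda>k. poly g (x k))) (\<Prod>i<j. [:- x i, 1:]))"
  using assms
proof (induction n arbitrary: g)
  case (Suc n)
  define w where "w = (\<Prod>i<n. [:- x i, 1:])"
  define h where "h = g - smult (coeff g n) w"
  have w: "degree w = n" "coeff w n = 1"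
    using degree_linear_factors[of x "{..<n}"] lead_coeff_linear_factors[of x "{..<n}"]
    by (simp_all add: w_def)
  have degg: "degree g \<le> n" using Suc.prems by auto
  have top: "divided_diff x n (\<lambda>k. poly g (x k)) = coeff g n"
    using Suc.prems by (intro divided_diff_eq_coeff degg) (simp add: lessThan_Suc_atMost)
  have "h = 0 \<or> degree h < n"
  proof (cases "h = 0")
    case False
    have "degree h \<le> n" unfolding h_def
      using degg w by (intro degree_diff_le order.trans[OF degree_smult_le]) auto
    moreover have "coeff h n = 0" using w by (simp add: h_def)
    ultimately show ?thesis using False
      by (metis le_neq_implies_less leading_coeff_0_iff)
  qed simp
  hence IH: "h = (\<Sum>j<n. smult (divided_diff x j (\<lambda>k. poly h (x k))) (\<Prod>i<j. [:- x i, 1:]))"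
    using Suc by (intro Suc.IH) (auto intro: inj_on_subset)
  have same: "divided_diff x j (\<lambda>k. poly h (x k)) = divided_diff x j (\<lambda>k. poly g (x k))"
    if "j < n" for j
  proof (rule divided_diff_cong)
    fix k assume "k \<le> j"
    hence "poly w (x k) = 0" using that unfolding w_def poly_prod by (intro prod_zero) auto
    thus "poly h (x k) = poly g (x k)" by (simp add: h_def)
  qed
  have "g = h + smult (coeff g n) w" by (simp add: h_def)
  also note IH
  finally show ?case using same top by (simp add: w_def)
qed simp

text \<open>In a finite field with q elements every element satisfies x^q = x: multiplication
  by a unit permutes the nonzero elements, so x^(q-1) = 1 for x \<noteq> 0.\<close>
lemma power_card_eq_self: "(x :: 'k::{field,finite}) ^ CARD('k) = x"
proof (cases "x = 0")
  case False
  let ?U = "UNIV - {0 :: 'k}"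
  have "x ^ card ?U * (\<Prod>y\<in>?U. y) = (\<Prod>y\<in>?U. x * y)"
    by (simp only: prod.distrib prod_constant)
  also have "\<dots> = (\<Prod>y\<in>?U. y)"
    by (rule prod.reindex_bij_witness[of _ "\<lambda>y. y / x" "\<lambda>y. x * y"]) (use False in auto)
  moreover have "(\<Prod>y\<in>?U. y) \<noteq> 0"
    by (subst prod_zero_iff) auto
  ultimately have "x ^ card ?U = 1"
    by (metis mult_cancel_right2)
  moreover have "CARD('k) = Suc (card ?U)"
    by (rule card.remove) simp_all
  ultimately show ?thesis by (metis power_Suc mult_1_right)
qed (simp add: finite_UNIV_card_ge_0)

lemma card_ge_2: "CARD('k::{field,finite}) \<ge> 2"
proof -
  have "card {0::'k, 1} \<le> CARD('k)" by (rule card_mono) auto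
  thus ?thesis by simp
qed

text \<open>Expanding
  (c+1)^q = c^q + 1 shows that the polynomial sum_{0<i<q} (q choose i) X^i of degree < q
  vanishes at all q elements of F_q, hence is zero.\<close>
lemma binomial_card_vanishes:
  assumes "0 < i" "i < CARD('k::{field,finite})"
  shows "of_nat (CARD('k) choose i) = (0 :: 'k)"
proof -
  define q where "q = CARD('k)"
  define P :: "'k poly" where "P = (\<Sum>i\<in>{1..<q}. monom (of_nat (q choose i)) i)"
  have q2: "q \<ge> 2" using card_ge_2[where 'k='k] by (simp add: q_def)
  have "poly P c = 0" for c
  proof -
    have "(c + 1) ^ q = (\<Sum>k\<le>q. of_nat (q choose k) * c ^ k * 1 ^ (q - k))"
      by (rule binomial_ring)
    also have "{..q} = insert 0 (insert q {1..<q})" using q2 by auto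
    also have "(\<Sum>k\<in>insert 0 (insert q {1..<q}). of_nat (q choose k) * c ^ k * 1 ^ (q - k))
               = 1 + (c ^ q + poly P c)"
      using q2 by (subst sum.insert; simp add: P_def poly_sum poly_monom)+
    finally show ?thesis using power_card_eq_self[of c] power_card_eq_self[of "c + 1"]
      by (simp add: q_def)
  qed
  moreover have "degree P \<le> q - 1"
    unfolding P_def by (intro degree_sum_le) (auto intro: order.trans[OF degree_monom_le])
  ultimately have "P = 0"
    using q2 by (intro poly_eqI_degree[where A = UNIV]) (simp_all add: q_def)
  hence "coeff P i = 0" by simp
  thus ?thesis
    using assms unfolding P_def coeff_sum coeff_monom by (simp add: q_def sum.delta)
qed

lemma freshmans_dream_binomial:
  fixes x y :: "'a::comm_ring_1"
  assumes "\<And>i. 0 < i \<Longrightarrow> i < n \<Longrightarrow> of_nat (n choose i) = (0::'a)" "n > 0"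
  shows "(x + y) ^ n = x ^ n + y ^ n"
proof -
  have "(x + y) ^ n = (\<Sum>k\<le>n. of_nat (n choose k) * x ^ k * y ^ (n - k))"
    by (rule binomial_ring)
  also have "\<dots> = (\<Sum>k\<in>{0,n}. of_nat (n choose k) * x ^ k * y ^ (n - k))"
    using assms(1) by (intro sum.mono_neutral_right) auto
  finally show ?thesis using \<open>n > 0\<close> by (simp add: add_ac)
qed

lemma to_fract_of_nat: "to_fract (of_nat n) = of_nat n"
  by (induction n) auto

lemma to_fract_power: "to_fract (x ^ n) = to_fract x ^ n"
  by (induction n) auto

lemma to_fract_prod: "to_fract (prod f S) = (\<Prod>x\<in>S. to_fract (f x))"
  by (induction S rule: infinite_finite_induct) auto

lemma frobenius_add:
  fixes x y :: "'k::{field,finite} poly fract"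
  shows "(x + y) ^ CARD('k) = x ^ CARD('k) + y ^ CARD('k)"
proof (rule freshmans_dream_binomial)
  fix i assume "0 < i" "i < CARD('k)"
  hence "[:of_nat (CARD('k) choose i):] = (0 :: 'k poly)"
    by (simp add: binomial_card_vanishes)
  thus "of_nat (CARD('k) choose i) = (0 :: 'k poly fract)"
    by (metis of_nat_poly to_fract_0 to_fract_of_nat)
qed simp

lemma Adeg_iff: "(a :: 'k::{field,finite} poly) \<in> Adeg d \<longleftrightarrow> (\<forall>k\<ge>d. coeff a k = 0)"
proof
  assume "a \<in> Adeg d"
  thus "\<forall>k\<ge>d. coeff a k = 0" by (auto simp: Adeg_def coeff_eq_0)
next
  assume "\<forall>k\<ge>d. coeff a k = 0"
  thus "a \<in> Adeg d" using degree_lessI[of a d] by (auto simp: Adeg_def)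
qed

lemma zero_in_Adeg: "0 \<in> Adeg d"
  by (simp add: Adeg_def)

lemma Adeg_diff: "a \<in> Adeg d \<Longrightarrow> b \<in> Adeg d \<Longrightarrow> a - b \<in> Adeg d"
  by (simp add: Adeg_iff)

lemma Adeg_eq_Poly_image:
  "(Adeg d :: 'k::{field,finite} poly set) = Poly ` {xs. length xs = d}"
proof (intro equalityI subsetI)
  fix a :: "'k poly" assume "a \<in> Adeg d"
  hence "a = Poly (map (coeff a) [0..<d])"
    by (intro sym[OF Poly_map_coeff_upt]) (auto simp: Adeg_def)
  thus "a \<in> Poly ` {xs. length xs = d}" by auto
next
  fix a :: "'k poly" assume "a \<in> Poly ` {xs. length xs = d}"
  then obtain xs where "length xs = d" "a = Poly xs" by auto
  thus "a \<in> Adeg d" by (simp add: Adeg_iff nth_default_def)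
qed

lemma card_Adeg: "card (Adeg d :: 'k::{field,finite} poly set) = CARD('k) ^ d"
proof -
  let ?L = "{xs :: 'k list. length xs = d}"
  have "inj_on Poly ?L"
  proof (rule inj_onI)
    fix xs ys assume "xs \<in> ?L" "ys \<in> ?L" "Poly xs = Poly ys"
    hence "length xs = length ys" "\<And>i. nth_default 0 xs i = nth_default 0 ys i"
      by (auto simp flip: coeff_Poly_eq)
    thus "xs = ys" by (metis nth_default_def nth_equalityI)
  qed
  hence "card (Poly ` ?L) = card ?L" by (rule card_image)
  thus ?thesis
    using card_lists_length_eq[of "UNIV :: 'k set" d] by (simp add: Adeg_eq_Poly_image)
qed

lemma finite_Adeg: "finite (Adeg d :: 'k::{field,finite} poly set)"
  unfolding Adeg_eq_Poly_image
  using finite_lists_length_eq[of "UNIV :: 'k set" d] by simp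

lemma Dprod_eq: "Dprod j = (\<Prod>a\<in>Adeg j. monom 1 j - (a :: 'k::{field,finite} poly))"
  unfolding Dprod_def
proof (rule prod.reindex_bij_witness[where i = "\<lambda>a. monom 1 j - a" and j = "\<lambda>a. monom 1 j - a"])
  fix a :: "'k poly" assume "a \<in> Adeg j"
  hence top: "coeff (monom 1 j - a) j = 1" and high: "\<forall>k>j. coeff (monom 1 j - a) k = 0"
    by (simp_all add: Adeg_iff)
  have "degree (monom 1 j - a) = j"
    using top high by (intro antisym degree_le le_degree) auto
  with top show "monom 1 j - a \<in> {p. lead_coeff p = 1 \<and> degree p = j}"
    by simp
next
  fix b :: "'k poly" assume "b \<in> {p. lead_coeff p = 1 \<and> degree p = j}"
  thus "monom 1 j - b \<in> Adeg j"
    by (auto simp: Adeg_iff coeff_monom coeff_eq_0)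
qed auto

lemma Dprod_nonzero: "Dprod j \<noteq> (0 :: 'k::{field,finite} poly)"
proof -
  have "monom 1 j - a \<noteq> 0" if "a \<in> Adeg j" for a :: "'k poly"
  proof
    assume "monom 1 j - a = 0"
    hence "coeff (monom 1 j - a) j = 0" by simp
    thus False using that by (simp add: Adeg_iff)
  qed
  thus ?thesis unfolding Dprod_eq by (simp add: finite_Adeg)
qed

lemma chi_t_pCons: "chi_t (pCons c a) = pCons (to_fract [:c:]) (chi_t a)"
  unfolding chi_t_def by (rule map_poly_pCons) simp

lemma chi_t_0 [simp]: "chi_t 0 = 0"
  by (simp add: chi_t_def)

lemma degree_chi_t: "degree (chi_t a) = degree a"
  unfolding chi_t_def by (rule degree_map_poly) simp

lemma coeff_chi_t: "coeff (chi_t a) n = to_fract [:coeff a n:]"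
  unfolding chi_t_def by (rule coeff_map_poly) simp

lemma poly_chi_t_theta: "poly (chi_t a) thetaK = to_fract a"
proof (induction a)
  case (pCons c a)
  have "pCons c a = [:c:] + [:0, 1:] * a" by simp
  hence "to_fract (pCons c a) = to_fract [:c:] + thetaK * to_fract a"
    unfolding thetaK_def by (metis to_fract_add to_fract_mult)
  with pCons show ?case by (simp add: chi_t_pCons)
qed simp

text \<open>Since the coefficients of chi_t a lie in F_q and the q-th power map is additive,
  evaluation of chi_t a commutes with the q-th power map.\<close>
lemma poly_chi_t_power_card:
  fixes a :: "'k::{field,finite} poly"
  shows "poly (chi_t a) (y ^ CARD('k)) = poly (chi_t a) y ^ CARD('k)"
proof (induction a)
  case 0
  then show ?case using card_ge_2[where 'k='k] by (simp add: power_0_left)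
next
  case (pCons c a)
  have "c ^ CARD('k) = c" by (rule power_card_eq_self)
  hence "to_fract [:c:] ^ CARD('k) = to_fract [:c:]"
    by (simp add: to_fract_power[symmetric] poly_const_pow)
  with pCons show ?case
    by (simp add: chi_t_pCons frobenius_add power_mult_distrib)
qed

text \<open>The nodes theta^(q^k), k = 0, 1, 2, ...: the roots of the b_j, and the interpolation
  nodes of the whole argument.\<close>
definition theta_node :: "nat \<Rightarrow> 'k::{field,finite} poly fract" where
  "theta_node k = thetaK ^ (CARD('k) ^ k)"

lemma theta_node_to_fract:
  "(theta_node k :: 'k::{field,finite} poly fract) = to_fract (monom 1 (CARD('k) ^ k))"
  by (simp add: theta_node_def thetaK_def to_fract_power monom_altdef)

text \<open>The nodes are pairwise distinct (they have distinct degrees q^k in theta).\<close>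
lemma inj_theta_node: "inj (theta_node :: nat \<Rightarrow> 'k::{field,finite} poly fract)"
proof (rule injI)
  fix k m assume "(theta_node k :: 'k poly fract) = theta_node m"
  hence "(monom 1 (CARD('k) ^ k) :: 'k poly) = monom 1 (CARD('k) ^ m)"
    by (simp add: theta_node_to_fract)
  hence "CARD('k) ^ k = CARD('k) ^ m"
    by (metis degree_monom_eq one_neq_zero)
  thus "k = m" using card_ge_2[where 'k='k] by (simp add: power_inject_exp)
qed

lemma poly_chi_t_theta_node:
  fixes a :: "'k::{field,finite} poly"
  shows "poly (chi_t a) (theta_node k) = to_fract a ^ (CARD('k) ^ k)"
proof (induction k)
  case 0
  then show ?case by (simp add: theta_node_def poly_chi_t_theta)
next
  case (Suc k)
  have "(theta_node (Suc k) :: 'k poly fract) = theta_node k ^ CARD('k)"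
    by (simp add: theta_node_def power_mult[symmetric] mult.commute)
  with Suc show ?case by (simp add: poly_chi_t_power_card power_mult[symmetric] mult.commute)
qed

text \<open>Carlitz's formula for E_j: the q-linear polynomial whose value at y is the divided
  difference of the values y^(q^k) at the nodes.\<close>
definition carlitz_poly :: "nat \<Rightarrow> 'k::{field,finite} poly fract poly" where
  "carlitz_poly j = (\<Sum>k\<le>j. monom (1 / (\<Prod>m\<in>{..j}-{k}. theta_node k - theta_node m)) (CARD('k) ^ k))"

lemma poly_carlitz_poly:
  fixes y :: "'k::{field,finite} poly fract"
  shows "poly (carlitz_poly j) y = divided_diff theta_node j (\<lambda>k. y ^ (CARD('k) ^ k))"
  by (simp add: carlitz_poly_def divided_diff_def poly_sum poly_monom)

lemma degree_carlitz_poly: "degree (carlitz_poly j :: 'k::{field,finite} poly fract poly) \<le> CARD('k) ^ j"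
  unfolding carlitz_poly_def using card_ge_2[where 'k='k]
  by (intro degree_sum_le) (auto intro!: order.trans[OF degree_monom_le] power_increasing)

text \<open>For a in A(j), the values a^(q^k) are those of the polynomial chi_t a of degree < j at
  the nodes, so their j-th divided difference vanishes.\<close>
lemma carlitz_poly_Adeg:
  assumes "a \<in> Adeg j"
  shows "poly (carlitz_poly j) (to_fract a) = 0"
proof -
  have "poly (carlitz_poly j) (to_fract a) = divided_diff theta_node j (\<lambda>k. poly (chi_t a) (theta_node k))"
    by (simp add: poly_carlitz_poly poly_chi_t_theta_node)
  also have "\<dots> = coeff (chi_t a) j"
    using assms inj_on_subset[OF inj_theta_node subset_UNIV]
    by (intro divided_diff_eq_coeff) (auto simp: degree_chi_t Adeg_def)
  also have "\<dots> = 0"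
    using assms by (simp add: coeff_chi_t Adeg_iff)
  finally show ?thesis .
qed

text \<open>At theta^j the values theta^(j q^k) come from the monomial t^j, whose j-th divided
  difference is 1.\<close>
lemma carlitz_poly_theta_power:
  "poly (carlitz_poly j) (thetaK ^ j :: 'k::{field,finite} poly fract) = 1"
proof -
  have "poly (carlitz_poly j) (thetaK ^ j :: 'k poly fract)
        = divided_diff theta_node j (\<lambda>k. poly (monom 1 j) (theta_node k))"
    by (simp add: poly_carlitz_poly poly_monom theta_node_def mult.commute flip: power_mult)
  also have "\<dots> = coeff (monom 1 j) j"
    by (intro divided_diff_eq_coeff degree_monom_le inj_on_subset[OF inj_theta_node subset_UNIV])
  finally show ?thesis by simp
qed

text \<open>The linear coefficient of the Carlitz polynomial comes from the node k = 0 alone.\<close>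
lemma coeff_carlitz_poly_1:
  "coeff (carlitz_poly d) 1
     = 1 / (\<Prod>m\<in>{..d}-{0}. theta_node 0 - theta_node m :: 'k::{field,finite} poly fract)"
proof -
  have "CARD('k) ^ k = 1 \<longleftrightarrow> k = 0" for k
    using card_ge_2[where 'k='k] by (simp add: power_eq_1_iff)
  thus ?thesis
    by (simp add: carlitz_poly_def coeff_sum coeff_monom sum.delta)
qed

text \<open>E_j has the q^j roots A(j) and value 1 at theta^j; these properties characterise it.\<close>
lemma degree_Epoly: "degree (Epoly j :: 'k::{field,finite} poly fract poly) = CARD('k) ^ j"
  using Dprod_nonzero[where 'k='k, of j]
  by (simp add: Epoly_def degree_linear_factors card_Adeg)

lemma Epoly_Adeg:
  assumes "a \<in> Adeg j"
  shows "poly (Epoly j) (to_fract a :: 'k::{field,finite} poly fract) = 0"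
  using assms finite_Adeg[where 'k='k, of j] by (simp add: Epoly_def poly_prod prod_zero_iff)

lemma Epoly_theta_power: "poly (Epoly j) (thetaK ^ j :: 'k::{field,finite} poly fract) = 1"
proof -
  have "(\<Prod>a\<in>Adeg j. thetaK ^ j - to_fract a) = to_fract (Dprod j :: 'k poly)"
    by (simp add: Dprod_eq to_fract_prod thetaK_def to_fract_power monom_altdef)
  thus ?thesis using Dprod_nonzero[where 'k='k, of j] by (simp add: Epoly_def poly_prod)
qed

text \<open>Carlitz's formula: E_j agrees with the Carlitz polynomial at the q^j + 1 points
  A(j) \<union> {theta^j}, and both have degree at most q^j.\<close>
lemma Epoly_eq_carlitz_poly: "Epoly j = (carlitz_poly j :: 'k::{field,finite} poly fract poly)"
proof -
  define P where "P = insert (thetaK ^ j) (to_fract ` Adeg j :: 'k poly fract set)"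
  have "thetaK ^ j \<notin> to_fract ` (Adeg j :: 'k poly set)"
  proof
    assume "thetaK ^ j \<in> to_fract ` (Adeg j :: 'k poly set)"
    then obtain a :: "'k poly" where a: "a \<in> Adeg j" "to_fract (monom 1 j) = to_fract a"
      by (auto simp: thetaK_def to_fract_power monom_altdef)
    hence "a = monom 1 j" by simp
    thus False using a(1) unfolding Adeg_iff by (metis coeff_monom le_refl one_neq_zero)
  qed
  moreover have "card (to_fract ` (Adeg j :: 'k poly set)) = CARD('k) ^ j"
    by (subst card_image) (simp_all add: inj_on_def card_Adeg)
  ultimately have card: "card P = Suc (CARD('k) ^ j)"
    by (simp add: P_def finite_Adeg)
  show ?thesis
  proof (rule poly_eqI_degree[where A = P])
    fix y assume "y \<in> P"
    thus "poly (Epoly j) y = poly (carlitz_poly j) y"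
      by (auto simp: P_def Epoly_theta_power carlitz_poly_theta_power Epoly_Adeg carlitz_poly_Adeg)
  next
    show "degree (Epoly j :: 'k poly fract poly) < card P"
         "degree (carlitz_poly j :: 'k poly fract poly) < card P"
      using degree_carlitz_poly[where 'k='k, of j] by (simp_all add: card degree_Epoly)
  qed
qed

lemma ell_eq_node_product:
  "to_fract (ell d) = (\<Prod>m\<in>{..d}-{0}. theta_node 0 - theta_node m :: 'k::{field,finite} poly fract)"
proof -
  have "{..d}-{0} = {1..d}" by auto
  thus ?thesis
    by (simp add: ell_def to_fract_prod theta_node_to_fract monom_altdef to_fract_power)
qed

lemma ell_nonzero: "ell d \<noteq> (0 :: 'k::{field,finite} poly)"
proof -
  have "to_fract (ell d :: 'k poly) \<noteq> 0"
    unfolding ell_eq_node_product using inj_theta_node[where 'k='k] by (auto simp: inj_eq)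
  thus ?thesis by simp
qed

lemma coeff_Epoly_1: "coeff (Epoly d) 1 = inverse (to_fract (ell d :: 'k::{field,finite} poly))"
  by (simp only: Epoly_eq_carlitz_poly coeff_carlitz_poly_1 ell_eq_node_product inverse_eq_divide)

lemma poly_Epoly_divided_diff:
  "poly (Epoly j) (to_fract b)
     = divided_diff theta_node j (\<lambda>k. poly (chi_t b) (theta_node k :: 'k::{field,finite} poly fract))"
  by (simp add: Epoly_eq_carlitz_poly poly_carlitz_poly poly_chi_t_theta_node)

lemma shifted_quotient:
  fixes p r :: "'a::field poly"
  assumes "p = [:0, 1:] * r"
  shows "(p \<circ>\<^sub>p [:- c, 1:]) div [:- c, 1:] = r \<circ>\<^sub>p [:- c, 1:]"
proof -
  have "p \<circ>\<^sub>p [:- c, 1:] = [:- c, 1:] * (r \<circ>\<^sub>p [:- c, 1:])"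
    by (simp add: assms pcompose_mult pcompose_pCons del: mult_pCons_left)
  thus ?thesis by (simp del: mult_pCons_left)
qed

text \<open>Since 0 \<in> A(d), E_d(z) is divisible by z.\<close>
lemma Epoly_divisible_by_z: "\<exists>r. Epoly d = [:0, 1:] * (r :: 'k::{field,finite} poly fract poly)"
proof -
  have "poly (Epoly d) (- 0 :: 'k poly fract) = 0"
    using Epoly_Adeg[OF zero_in_Adeg, where 'k='k] by simp
  thus ?thesis by (metis dvd_iff_poly_eq_0 dvdE)
qed

lemma degree_Epoly_shifted_quotient:
  "degree ((Epoly d \<circ>\<^sub>p [:- c, 1:]) div [:- c, 1:]) < CARD('k) ^ d"
  for c :: "'k::{field,finite} poly fract"
proof -
  obtain r where r: "Epoly d = [:0, 1:] * (r :: 'k poly fract poly)"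
    using Epoly_divisible_by_z by blast
  have "r \<noteq> 0" using r degree_Epoly[where 'k='k, of d] by auto
  hence "degree (Epoly d :: 'k poly fract poly) = Suc (degree r)"
    by (simp add: r degree_mult_eq)
  thus ?thesis by (simp add: shifted_quotient[OF r] degree_pcompose degree_Epoly)
qed

text \<open>For a, b in A(d): E_d(b-a)/(b-a) vanishes unless b = a (then b - a is a nonzero
  root of E_d), and equals E_d'(0) = 1/ell_d at b = a.\<close>
lemma poly_Epoly_shifted_quotient:
  assumes "a \<in> Adeg d" "b \<in> Adeg d"
  shows "poly ((Epoly d \<circ>\<^sub>p [:- to_fract a, 1:]) div [:- to_fract a, 1:]) (to_fract b)
         = (if a = b then inverse (to_fract (ell d)) else (0 :: 'k::{field,finite} poly fract))"
proof -
  obtain r where r: "Epoly d = [:0, 1:] * (r :: 'k poly fract poly)"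
    using Epoly_divisible_by_z by blast
  have "poly ((Epoly d \<circ>\<^sub>p [:- to_fract a, 1:]) div [:- to_fract a, 1:]) (to_fract b)
        = poly r (to_fract (b - a))"
    by (simp add: shifted_quotient[OF r] poly_pcompose)
  also have "\<dots> = (if a = b then inverse (to_fract (ell d)) else 0)"
  proof (cases "a = b")
    case True
    have "poly r 0 = coeff (Epoly d) 1" by (simp add: r poly_0_coeff_0)
    also have "\<dots> = inverse (to_fract (ell d))" by (rule coeff_Epoly_1)
    finally show ?thesis using True by simp
  next
    case False
    have "to_fract (b - a) * poly r (to_fract (b - a)) = poly (Epoly d) (to_fract (b - a))"
      by (simp add: r)
    also have "\<dots> = 0" using assms by (intro Epoly_Adeg Adeg_diff)
    finally show ?thesis using False by simp
  qed
  finally show ?thesis .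
qed

lemma poly_liftz: "poly (liftz p) [:y:] = [:poly p y:]"
  by (induction p) (simp_all add: liftz_def map_poly_pCons)

lemma degree_liftz: "degree (liftz p) = degree p"
  unfolding liftz_def by (rule degree_map_poly) simp

lemma bpoly_eq_node_product: "bpoly j = (\<Prod>i<j. [:- theta_node i, 1:] :: 'k::{field,finite} poly fract poly)"
  by (simp add: bpoly_def theta_node_def)

text \<open>Newton interpolation of chi_t b (b in A(d), degree < d) at the nodes theta^(q^i):
  the coefficients are the divided differences, i.e. the values E_j(b).\<close>
lemma chi_t_newton_expansion:
  fixes b :: "'k::{field,finite} poly"
  assumes "b \<in> Adeg d"
  shows "chi_t b = (\<Sum>j<d. bpoly j * [:poly (Epoly j) (to_fract b):])"
proof -
  have "chi_t b = (\<Sum>j<d. smult (divided_diff theta_node j (\<lambda>k. poly (chi_t b) (theta_node k)))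
                                (\<Prod>i<j. [:- theta_node i, 1:]))"
    using assms inj_on_subset[OF inj_theta_node subset_UNIV]
    by (intro newton_interpolation) (auto simp: Adeg_def degree_chi_t)
  thus ?thesis
    by (simp add: poly_Epoly_divided_diff bpoly_eq_node_product mult.commute)
qed

text \<open>By the orthogonality relation above, the left-hand side of the corollary
  takes the value chi_t b at z = b, for every b in A(d).\<close>
lemma interpolation_sum_at_Adeg:
  fixes b :: "'k::{field,finite} poly"
  assumes "b \<in> Adeg d"
  shows "poly (\<Sum>a\<in>Adeg d. smult (chi_t a) (liftz (smult (to_fract (ell d))
           ((Epoly d \<circ>\<^sub>p [:- to_fract a, 1:]) div [:- to_fract a, 1:])))) [:to_fract b:]
         = chi_t b"
proof -
  have "poly (\<Sum>a\<in>Adeg d. smult (chi_t a) (liftz (smult (to_fract (ell d))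
           ((Epoly d \<circ>\<^sub>p [:- to_fract a, 1:]) div [:- to_fract a, 1:])))) [:to_fract b:]
        = (\<Sum>a\<in>Adeg d. if a = b then chi_t a else 0)"
    unfolding poly_sum
    by (intro sum.cong refl) (simp add: assms poly_liftz poly_Epoly_shifted_quotient ell_nonzero)
  also have "\<dots> = chi_t b" using assms by (simp add: finite_Adeg)
  finally show ?thesis .
qed

text \<open>Both sides have z-degree < q^d = |A(d)| and agree at every z = b in A(d).
  (The argument does not need the hypothesis d \<ge> 1: for d = 0 both sides vanish.)\<close>
theorem corollary2p6:
  fixes d :: nat
  assumes "d \<ge> 1"
  shows "(\<Sum>a\<in>(Adeg d :: 'k::{field,finite} poly set).
            smult (chi_t a)
              (liftz (smult (to_fract (ell d))
                 ((Epoly d \<circ>\<^sub>p [:- to_fract a, 1:]) div [:- to_fract a, 1:]))))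
         = (\<Sum>j<d. smult (bpoly j) (liftz (Epoly j :: 'k poly fract poly)))"
    (is "?L = ?R")
proof (rule poly_eqI_degree[where A = "(\<lambda>b. [:to_fract b:]) ` (Adeg d :: 'k poly set)"])
  have card: "card ((\<lambda>b. [:to_fract b:]) ` (Adeg d :: 'k poly set)) = CARD('k) ^ d"
    by (subst card_image) (simp_all add: inj_on_def card_Adeg)
  show "degree ?L < card ((\<lambda>b. [:to_fract b:]) ` (Adeg d :: 'k poly set))"
    unfolding card
    by (intro degree_sum_less le_less_trans[OF degree_smult_le])
       (simp_all add: degree_liftz le_less_trans[OF degree_smult_le] degree_Epoly_shifted_quotient)
  show "degree ?R < card ((\<lambda>b. [:to_fract b:]) ` (Adeg d :: 'k poly set))"
    unfolding card using card_ge_2[where 'k='k]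
    by (intro degree_sum_less le_less_trans[OF degree_smult_le])
       (simp_all add: degree_liftz degree_Epoly power_strict_increasing)
next
  fix w assume "w \<in> (\<lambda>b. [:to_fract b:]) ` (Adeg d :: 'k poly set)"
  then obtain b :: "'k poly" where b: "b \<in> Adeg d" "w = [:to_fract b:]" by auto
  have "poly ?L w = chi_t b"
    unfolding b(2) by (rule interpolation_sum_at_Adeg[OF b(1)])
  also have "\<dots> = (\<Sum>j<d. bpoly j * [:poly (Epoly j) (to_fract b):])"
    by (rule chi_t_newton_expansion[OF b(1)])
  also have "\<dots> = poly ?R w"
    unfolding poly_sum by (simp add: b poly_liftz)
  finally show "poly ?L w = poly ?R w" .
qed

end
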